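(* Let $\mathcal{X}=\{x_1,\dots,x_n\}$ and $\mathcal{Y}=\{y_1,\dots,y_m\}$ be the entity sets of a source KG and a target KG, with triplet sets $\mathcal{T}^{\mathcal{X}}$ and $\mathcal{T}^{\mathcal{Y}}$ respectively (each already augmented with reverse triplets as described in the context). Let $\mathbf{x}_1,\dots,\mathbf{x}_n,\mathbf{y}_1,\dots,\mathbf{y}_m\in\mathbb{R}^d$ be entity embeddings and suppose that, in each KG separately, every entity $e$ with $\mathcal{T}_e\neq\emptyset$ satisfies the TransE stationarity relation $$\mathbf{e}=\frac{1}{|\mathcal{T}_e|}\sum_{(e,r,o)\in\mathcal{T}_e}\Big(\mathbf{o}-\frac{1}{|\mathcal{T}_r|}\sum_{(s',r,o')\in\mathcal{T}_r}(\mathbf{o}'-\mathbf{s}')\Big),$$ where the triplet sets are taken within that KG. Define $\Lambda=(\lambda_{i,j})\in\mathbb{R}^{n\times n}$ by $$\lambda_{i,j}=\frac{1}{|\mathcal{T}_{x_i}|}\Big(|R(x_i,x_j)|+\sum_{r\in R}\frac{|\mathcal{T}_{x_i,r}|}{|\mathcal{T}_r|}\big(|\mathcal{T}_{x_j,r}|-|\mathcal{T}_{x_j,r^{-1}}|\big)\Big)$$ (computed in the source KG), and $\Lambda'=(\lambda'_{i,j})\in\mathbb{R}^{m\times m}$ analogously in the target KG. Then $\mathbf{x}_i=\sum_{k=1}^n\lambda_{i,k}\mathbf{x}_k$ for all $i$, $\mathbf{y}_j=\sum_{l=1}^m\lambda'_{j,l}\mathbf{y}_l$ for all $j$, and the pairwise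 similarity matrix $\Omega=(\omega_{i,j})\in\mathbb{R}^{n\times m}$, $\omega_{i,j}=\mathbf{x}_i\cdot\mathbf{y}_j$, is a fixpoint of the map $\Omega\mapsto\Lambda\Omega(\Lambda')^\top$, i.e. $\Lambda\Omega(\Lambda')^\top=\Omega$.
   Context: A knowledge graph (KG) is a set of triplets $(s,r,o)$ (subject entity, relation, object entity). For each triplet $(s,r,o)$ a reverse triplet $(o,r^{-1},s)$ is added, with $r^{-1}$ a new relation symbol; $R$ denotes the set of all relations (including reverse ones). Notation: $\mathcal{T}_e$ is the set of triplets with $e$ as subject; $\mathcal{T}_r$ the set of triplets with relation $r$; $\mathcal{T}_{e,r}$ the set of triplets with subject $e$ and relation $r$; $R(x_i,x_j)$ the set of relations $r$ with $(x_i,r,x_j)$ a triplet. All sets of triplets involved are assumed nonempty where they appear in a denominator. The stationarity relation above is the form the entity embeddings take at a stationary point of the TransE-based entity alignment loss (translational loss $\sum\|\mathbf{s}+\mathbf{r}-\mathbf{o}\|_2^2$ plus alignment loss plus unit-norm constraints), after eliminating relation embeddings. *)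

theory Defs
  imports "HOL-Analysis.Analysis"
begin

text \<open>A knowledge graph over entity type 'e and relation type 'r is a set of
triplets (subject, relation, object). The map rinv sends r to its reverse relation.\<close>

definition trip_subj :: "('e \<times> 'r \<times> 'e) set \<Rightarrow> 'e \<Rightarrow> ('e \<times> 'r \<times> 'e) set"
  where "trip_subj T e = {t \<in> T. fst t = e}"

definition trip_rel :: "('e \<times> 'r \<times> 'e) set \<Rightarrow> 'r \<Rightarrow> ('e \<times> 'r \<times> 'e) set"
  where "trip_rel T r = {t \<in> T. fst (snd t) = r}"

definition trip_subj_rel :: "('e \<times> 'r \<times> 'e) set \<Rightarrow> 'e \<Rightarrow> 'r \<Rightarrow> ('e \<times> 'r \<times> 'e) set"
  where "trip_subj_rel T e r = {t \<in> T. fst t = e \<and> fst (snd t) = r}"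

definition rels_between :: "('e \<times> 'r \<times> 'e) set \<Rightarrow> 'e \<Rightarrow> 'e \<Rightarrow> 'r set"
  where "rels_between T a b = {r. (a, r, b) \<in> T}"

definition rels :: "('e \<times> 'r \<times> 'e) set \<Rightarrow> 'r set"
  where "rels T = {r. \<exists>s ob. (s, r, ob) \<in> T}"

definition reverse_closed :: "('e \<times> 'r \<times> 'e) set \<Rightarrow> ('r \<Rightarrow> 'r) \<Rightarrow> bool"
  where "reverse_closed T rinv \<longleftrightarrow>
           (\<forall>r. rinv (rinv r) = r) \<and> (\<forall>s r ob. (s, r, ob) \<in> T \<longrightarrow> (ob, rinv r, s) \<in> T)"

definition transE_stationary :: "('e \<times> 'r \<times> 'e) set \<Rightarrow> ('e \<Rightarrow> real ^ 'd) \<Rightarrow> bool"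
  where "transE_stationary T emb \<longleftrightarrow>
    (\<forall>e. trip_subj T e \<noteq> {} \<longrightarrow>
       emb e = (1 / real (card (trip_subj T e))) *\<^sub>R
         (\<Sum>(s, r, ob) \<in> trip_subj T e.
            emb ob - (1 / real (card (trip_rel T r))) *\<^sub>R
                      (\<Sum>(s', r', o') \<in> trip_rel T r. emb o' - emb s')))"

definition lam :: "('e \<times> 'r \<times> 'e) set \<Rightarrow> ('r \<Rightarrow> 'r) \<Rightarrow> 'e \<Rightarrow> 'e \<Rightarrow> real"
  where "lam T rinv a b = (1 / real (card (trip_subj T a))) *
     (real (card (rels_between T a b)) +
      (\<Sum>r \<in> rels T. real (card (trip_subj_rel T a r)) / real (card (trip_rel T r)) *
           (real (card (trip_subj_rel T b r)) - real (card (trip_subj_rel T b (rinv r))))))"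

definition lam_matrix :: "('e::finite \<times> 'r \<times> 'e) set \<Rightarrow> ('r \<Rightarrow> 'r) \<Rightarrow> real ^ 'e ^ 'e"
  where "lam_matrix T rinv = (\<chi> i j. lam T rinv i j)"

end

theory Submission
  imports Defs
begin

text \<open>The stationarity relation is linear in the embeddings. Its first sum contributes one
copy of \<open>k\<close> for each relation from \<open>e\<close> to \<open>k\<close>. In the translation vector of a
relation \<open>r\<close>, entity \<open>k\<close> occurs as an object once per triplet \<open>(k, r\<inverse>, _)\<close> (by reverse
closure) and as a subject once per triplet \<open>(k, r, _)\<close>. Collecting coefficients gives
\<open>x = \<Lambda> x\<close> and \<open>y = \<Lambda>' y\<close>, and taking inner products of these two identities gives
\<open>\<Omega> = \<Lambda> \<Omega> \<Lambda>'\<^sup>T\<close>.\<close>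

lemma sum_comp_eq_sum_card_fibres:
  fixes f :: "'k \<Rightarrow> 'v::real_vector"
  assumes "finite A" "finite S" "g ` A \<subseteq> S"
  shows "(\<Sum>t\<in>A. f (g t)) = (\<Sum>k\<in>S. real (card {t\<in>A. g t = k}) *\<^sub>R f k)"
proof -
  have "(\<Sum>t\<in>A. f (g t)) = (\<Sum>k\<in>S. \<Sum>t\<in>{t\<in>A. g t = k}. f (g t))"
    using sum.group[OF assms, of "\<lambda>t. f (g t)"] by simp
  also have "\<dots> = (\<Sum>k\<in>S. \<Sum>t\<in>{t\<in>A. g t = k}. f k)"
    by (intro sum.cong) auto
  finally show ?thesis by (simp add: sum_constant_scaleR)
qed

lemma finite_rels: "finite T \<Longrightarrow> finite (rels T)"
proof -
  have "rels T = (\<lambda>t. fst (snd t)) ` T" unfolding rels_def by force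
  thus "finite T \<Longrightarrow> finite (rels T)" by simp
qed

lemma finite_trip_subj: "finite T \<Longrightarrow> finite (trip_subj T e)"
  unfolding trip_subj_def by simp

lemma finite_trip_rel: "finite T \<Longrightarrow> finite (trip_rel T r)"
  unfolding trip_rel_def by simp

lemma card_trip_subj_obj_eq_card_rels_between:
  "card {t \<in> trip_subj T e. snd (snd t) = k} = card (rels_between T e k)"
proof -
  have "{t \<in> trip_subj T e. snd (snd t) = k} = (\<lambda>r. (e, r, k)) ` rels_between T e k"
    unfolding trip_subj_def rels_between_def by force
  moreover have "inj_on (\<lambda>r. (e, r, k)) (rels_between T e k)" by (auto simp: inj_on_def)
  ultimately show ?thesis by (simp add: card_image)
qed

lemma trip_rel_filter_subj_eq:
  "{t \<in> trip_rel T r. fst t = k} = trip_subj_rel T k r"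
  unfolding trip_rel_def trip_subj_rel_def by auto

lemma trip_subj_filter_rel_eq:
  "{t \<in> trip_subj T e. fst (snd t) = r} = trip_subj_rel T e r"
  unfolding trip_subj_def trip_subj_rel_def by auto

lemma card_trip_rel_obj_eq_card_trip_subj_rel_rinv:
  fixes T :: "('e \<times> 'r \<times> 'e) set"
  assumes "reverse_closed T rinv"
  shows "card {t \<in> trip_rel T r. snd (snd t) = k} = card (trip_subj_rel T k (rinv r))"
proof -
  have inv: "\<And>r. rinv (rinv r) = r" and cl: "\<And>s r ob. (s, r, ob) \<in> T \<Longrightarrow> (ob, rinv r, s) \<in> T"
    using assms unfolding reverse_closed_def by auto
  define flip :: "'e \<times> 'r \<times> 'e \<Rightarrow> 'e \<times> 'r \<times> 'e"
    where "flip t = (snd (snd t), rinv (fst (snd t)), fst t)" for t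
  have "{t \<in> trip_rel T r. snd (snd t) = k} = flip ` trip_subj_rel T k (rinv r)"
  proof (intro equalityI subsetI)
    fix t assume "t \<in> {t \<in> trip_rel T r. snd (snd t) = k}"
    then obtain s where t: "t = (s, r, k)" "(s, r, k) \<in> T"
      unfolding trip_rel_def by (cases t) auto
    hence "(k, rinv r, s) \<in> trip_subj_rel T k (rinv r)"
      using cl unfolding trip_subj_rel_def by auto
    moreover have "t = flip (k, rinv r, s)" using t inv by (simp add: flip_def)
    ultimately show "t \<in> flip ` trip_subj_rel T k (rinv r)" by blast
  next
    fix t assume "t \<in> flip ` trip_subj_rel T k (rinv r)"
    then obtain ob where "(k, rinv r, ob) \<in> T" "t = flip (k, rinv r, ob)"
      unfolding trip_subj_rel_def by auto
    thus "t \<in> {t \<in> trip_rel T r. snd (snd t) = k}"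
      using cl[of k "rinv r" ob] inv unfolding trip_rel_def flip_def by simp
  qed
  moreover have "inj_on flip (trip_subj_rel T k (rinv r))"
    by (rule inj_on_inverseI[where g = flip]) (auto simp: flip_def inv)
  ultimately show ?thesis by (simp add: card_image)
qed

lemma sum_trip_subj_obj:
  fixes emb :: "'e::finite \<Rightarrow> 'v::real_vector"
  assumes "finite T"
  shows "(\<Sum>t\<in>trip_subj T e. emb (snd (snd t)))
       = (\<Sum>k\<in>UNIV. real (card (rels_between T e k)) *\<^sub>R emb k)"
  using sum_comp_eq_sum_card_fibres[of "trip_subj T e" UNIV "\<lambda>t. snd (snd t)" emb]
  by (simp add: assms finite_trip_subj card_trip_subj_obj_eq_card_rels_between)

lemma sum_trip_subj_by_rel:
  fixes f :: "'r \<Rightarrow> 'v::real_vector"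
  assumes "finite T"
  shows "(\<Sum>t\<in>trip_subj T e. f (fst (snd t)))
       = (\<Sum>r\<in>rels T. real (card (trip_subj_rel T e r)) *\<^sub>R f r)"
proof -
  have "(\<lambda>t. fst (snd t)) ` trip_subj T e \<subseteq> rels T"
    unfolding trip_subj_def rels_def by force
  thus ?thesis
    using sum_comp_eq_sum_card_fibres[of "trip_subj T e" "rels T" "\<lambda>t. fst (snd t)" f]
    by (simp add: assms finite_trip_subj finite_rels trip_subj_filter_rel_eq)
qed

lemma sum_trip_rel_translation:
  fixes emb :: "'e::finite \<Rightarrow> 'v::real_vector"
  assumes "finite T" and "reverse_closed T rinv"
  shows "(\<Sum>t\<in>trip_rel T r. emb (snd (snd t)) - emb (fst t))
       = (\<Sum>k\<in>UNIV. (real (card (trip_subj_rel T k (rinv r)))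
                       - real (card (trip_subj_rel T k r))) *\<^sub>R emb k)"
proof -
  have "(\<Sum>t\<in>trip_rel T r. emb (snd (snd t)) - emb (fst t))
      = (\<Sum>t\<in>trip_rel T r. emb (snd (snd t))) - (\<Sum>t\<in>trip_rel T r. emb (fst t))"
    by (simp add: sum_subtractf)
  also have "(\<Sum>t\<in>trip_rel T r. emb (snd (snd t)))
      = (\<Sum>k\<in>UNIV. real (card (trip_subj_rel T k (rinv r))) *\<^sub>R emb k)"
    using sum_comp_eq_sum_card_fibres[of "trip_rel T r" UNIV "\<lambda>t. snd (snd t)" emb]
    by (simp add: assms finite_trip_rel card_trip_rel_obj_eq_card_trip_subj_rel_rinv[OF assms(2)])
  also have "(\<Sum>t\<in>trip_rel T r. emb (fst t))
      = (\<Sum>k\<in>UNIV. real (card (trip_subj_rel T k r)) *\<^sub>R emb k)"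
    using sum_comp_eq_sum_card_fibres[of "trip_rel T r" UNIV fst emb]
    by (simp add: assms finite_trip_rel trip_rel_filter_subj_eq)
  finally show ?thesis by (simp add: sum_subtractf scaleR_diff_left)
qed

lemma transE_stationary_imp_lam_fixpoint:
  fixes T :: "('e::finite \<times> 'r \<times> 'e) set" and emb :: "'e \<Rightarrow> real ^ 'd"
  assumes fin: "finite T" and rc: "reverse_closed T rinv"
    and ne: "trip_subj T e \<noteq> {}" and st: "transE_stationary T emb"
  shows "emb e = (\<Sum>k\<in>UNIV. lam T rinv e k *\<^sub>R emb k)"
proof -
  define n where "n = real (card (trip_subj T e))"
  define w where "w r = real (card (trip_subj_rel T e r)) / real (card (trip_rel T r))" for r
  define d where "d k r = real (card (trip_subj_rel T k r)) - real (card (trip_subj_rel T k (rinv r)))"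
    for k r
  have translation: "(\<Sum>t\<in>trip_rel T r. emb (snd (snd t)) - emb (fst t))
      = - (\<Sum>k\<in>UNIV. d k r *\<^sub>R emb k)" for r
    using sum_trip_rel_translation[OF fin rc, of emb r]
    by (simp add: d_def sum_negf[symmetric] algebra_simps)
  have "emb e = (1 / n) *\<^sub>R (\<Sum>t\<in>trip_subj T e. emb (snd (snd t))
      - (1 / real (card (trip_rel T (fst (snd t))))) *\<^sub>R
        (\<Sum>t'\<in>trip_rel T (fst (snd t)). emb (snd (snd t')) - emb (fst t')))"
    using st ne unfolding transE_stationary_def n_def by (simp add: case_prod_beta)
  also have "\<dots> = (1 / n) *\<^sub>R ((\<Sum>t\<in>trip_subj T e. emb (snd (snd t)))
      + (\<Sum>t\<in>trip_subj T e. (1 / real (card (trip_rel T (fst (snd t))))) *\<^sub>R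
          (\<Sum>k\<in>UNIV. d k (fst (snd t)) *\<^sub>R emb k)))"
    by (simp add: translation sum.distrib)
  also have "\<dots> = (1 / n) *\<^sub>R ((\<Sum>k\<in>UNIV. real (card (rels_between T e k)) *\<^sub>R emb k)
      + (\<Sum>r\<in>rels T. w r *\<^sub>R (\<Sum>k\<in>UNIV. d k r *\<^sub>R emb k)))"
    using sum_trip_subj_by_rel[OF fin, of "\<lambda>r. (1 / real (card (trip_rel T r))) *\<^sub>R
        (\<Sum>k\<in>UNIV. d k r *\<^sub>R emb k)" e]
    by (simp add: sum_trip_subj_obj[OF fin] w_def)
  also have "(\<Sum>r\<in>rels T. w r *\<^sub>R (\<Sum>k\<in>UNIV. d k r *\<^sub>R emb k))
      = (\<Sum>k\<in>UNIV. (\<Sum>r\<in>rels T. w r * d k r) *\<^sub>R emb k)"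
    unfolding scaleR_right.sum scaleR_scaleR scaleR_sum_left by (rule sum.swap)
  also have "(1 / n) *\<^sub>R ((\<Sum>k\<in>UNIV. real (card (rels_between T e k)) *\<^sub>R emb k)
      + (\<Sum>k\<in>UNIV. (\<Sum>r\<in>rels T. w r * d k r) *\<^sub>R emb k))
      = (\<Sum>k\<in>UNIV. lam T rinv e k *\<^sub>R emb k)"
    by (simp add: lam_def n_def w_def d_def scaleR_right.sum sum.distrib[symmetric]
        scaleR_add_left[symmetric])
  finally show ?thesis .
qed

lemma gram_matrix_fixpoint:
  fixes A :: "real ^ 'a ^ 'a" and B :: "real ^ 'b ^ 'b"
    and x :: "'a::finite \<Rightarrow> 'v::real_inner" and y :: "'b::finite \<Rightarrow> 'v"
  assumes "\<And>i. x i = (\<Sum>k\<in>UNIV. A $ i $ k *\<^sub>R x k)"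
    and "\<And>j. y j = (\<Sum>l\<in>UNIV. B $ j $ l *\<^sub>R y l)"
  shows "A ** (\<chi> i j. x i \<bullet> y j) ** transpose B = (\<chi> i j. x i \<bullet> y j)"
proof (intro iffD2[OF vec_eq_iff] allI)
  fix i j
  have "(A ** (\<chi> i j. x i \<bullet> y j) ** transpose B) $ i $ j
      = (\<Sum>l\<in>UNIV. (\<Sum>k\<in>UNIV. A $ i $ k * (x k \<bullet> y l)) * B $ j $ l)"
    by (simp add: matrix_matrix_mult_def transpose_def)
  also have "\<dots> = (\<Sum>k\<in>UNIV. A $ i $ k *\<^sub>R x k) \<bullet> (\<Sum>l\<in>UNIV. B $ j $ l *\<^sub>R y l)"
    by (simp add: inner_sum_left inner_sum_right sum_distrib_left sum_distrib_right
        algebra_simps)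
  also have "\<dots> = x i \<bullet> y j" using assms by metis
  finally show "(A ** (\<chi> i j. x i \<bullet> y j) ** transpose B) $ i $ j = (\<chi> i j. x i \<bullet> y j) $ i $ j"
    by simp
qed

theorem theorem1:
  fixes TX :: "('a::finite \<times> 'r \<times> 'a) set" and invX :: "'r \<Rightarrow> 'r"
    and TY :: "('b::finite \<times> 's \<times> 'b) set" and invY :: "'s \<Rightarrow> 's"
    and x :: "'a \<Rightarrow> real ^ 'd" and y :: "'b \<Rightarrow> real ^ 'd"
  assumes "finite TX" and "finite TY"
    and "reverse_closed TX invX" and "reverse_closed TY invY"
    and "\<forall>i. trip_subj TX i \<noteq> {}" and "\<forall>j. trip_subj TY j \<noteq> {}"
    and "transE_stationary TX x" and "transE_stationary TY y"
  shows "(\<forall>i. x i = (\<Sum>k\<in>UNIV. lam TX invX i k *\<^sub>R x k))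
       \<and> (\<forall>j. y j = (\<Sum>l\<in>UNIV. lam TY invY j l *\<^sub>R y l))
       \<and> lam_matrix TX invX ** (\<chi> i j. x i \<bullet> y j) ** transpose (lam_matrix TY invY)
           = (\<chi> i j. x i \<bullet> y j)"
proof -
  have X: "x i = (\<Sum>k\<in>UNIV. lam TX invX i k *\<^sub>R x k)" for i
    using assms(1,3,5,7) by (intro transE_stationary_imp_lam_fixpoint) auto
  have Y: "y j = (\<Sum>l\<in>UNIV. lam TY invY j l *\<^sub>R y l)" for j
    using assms(2,4,6,8) by (intro transE_stationary_imp_lam_fixpoint) auto
  have M: "lam_matrix TX invX ** (\<chi> i j. x i \<bullet> y j) ** transpose (lam_matrix TY invY)
      = (\<chi> i j. x i \<bullet> y j)"
    by (rule gram_matrix_fixpoint) (simp_all add: lam_matrix_def flip: X Y)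
  show ?thesis by (intro conjI allI X Y M)
qed

end
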